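(* For every integer $n\ge2$, \[ \log g(n)\le \theta\big(P^{+}(g(n))\big)+S(q), \] where $q$ is the prime following $P^{+}(g(n))$ and $S(q)=\sum_{2\le\alpha\le \log(2q)/\log2}\theta(q^{1/\alpha}+1)$ (sum over integers $\alpha$).
   Context: $g(n)$ is the maximal order of an element of $\mathfrak S_n$, i.e. $g(n)=\max\{M\ge1:\ell(M)\le n\}$ with $\ell$ additive, $\ell(1)=0$, $\ell(p^a)=p^a$; $P^{+}(M)$ is the largest prime factor of $M$. $\theta(x)=\sum_{p\le x}\log p$. *)

theory Defs
  imports "HOL-Computational_Algebra.Primes" Complex_Main
begin

definition ell :: "nat \<Rightarrow> nat" where
  "ell M = (\<Sum>p\<in>prime_factors M. p ^ multiplicity p M)"

text \<open>Landau's function: maximal order of an element of S_n.\<close>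
definition landau_g :: "nat \<Rightarrow> nat" where
  "landau_g n = Max {M. M \<ge> 1 \<and> ell M \<le> n}"

definition Pplus :: "nat \<Rightarrow> nat" where
  "Pplus M = Max (prime_factors M)"

definition cheb_theta :: "real \<Rightarrow> real" where
  "cheb_theta x = (\<Sum>p\<in>{p::nat. prime p \<and> real p \<le> x}. ln (real p))"

definition next_prime :: "nat \<Rightarrow> nat" where
  "next_prime m = (LEAST q. prime q \<and> q > m)"

definition S_sum :: "nat \<Rightarrow> real" where
  "S_sum q = (\<Sum>\<alpha>\<in>{\<alpha>::nat. 2 \<le> \<alpha> \<and> real \<alpha> \<le> ln (2 * real q) / ln 2}.
                cheb_theta (real q powr (1 / real \<alpha>) + 1))"

end

theory Submission
  imports Defs
begin

text \<open>
  Let \<open>N = g(n)\<close> and let \<open>q\<close> be the prime following \<open>P\<^sup>+(N)\<close>. If \<open>p\<close> divides \<open>N\<close>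
  exactly \<open>a \<ge> 2\<close> times, then \<open>N q / p > N\<close>, so by maximality its cost
  \<open>\<ell>(N) - p\<^sup>a + p\<^sup>a\<^sup>-\<^sup>1 + q\<close> exceeds \<open>n \<ge> \<ell>(N)\<close>; that is, \<open>p\<^sup>a\<^sup>-\<^sup>1 (p - 1) < q\<close>.
  Consequently \<open>p \<le> q\<^sup>1\<^sup>/\<^sup>\<alpha> + 1\<close> for \<open>2 \<le> \<alpha> \<le> a\<close>, and \<open>2\<^sup>a\<^sup>-\<^sup>1 < q\<close> gives
  \<open>a \<le> log(2q) / log 2\<close>. Now split \<open>log N = \<Sum> a\<^sub>p log p\<close> into layers: the primes dividing
  \<open>N\<close> contribute at most \<open>\<theta>(P\<^sup>+(N))\<close>, and for each \<open>\<alpha> \<ge> 2\<close> the primes with \<open>a\<^sub>p \<ge> \<alpha>\<close>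
  contribute at most \<open>\<theta>(q\<^sup>1\<^sup>/\<^sup>\<alpha> + 1)\<close>.
\<close>

lemma ell_prime_power:
  assumes "prime p" "k > 0"
  shows "ell (p ^ k) = p ^ k"
  using assms by (simp add: ell_def prime_factorization_prime_power)

lemma ell_mult_coprime:
  fixes a b :: nat
  assumes "coprime a b"
  shows "ell (a * b) = ell a + ell b"
proof (cases "a = 0 \<or> b = 0")
  case True
  then show ?thesis using assms by (auto simp: ell_def)
next
  case False
  have disjoint: "prime_factors a \<inter> prime_factors b = {}"
    using assms by (auto simp: in_prime_factors_iff dest: coprime_common_divisor_nat)
  have mult_a: "multiplicity p (a * b) = multiplicity p a" if "p \<in> prime_factors a" for p
  proof -
    have "prime p" "\<not> p dvd b"
      using False disjoint that by (auto simp: prime_factors_dvd)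
    then show ?thesis
      using False by (simp add: prime_elem_multiplicity_mult_distrib not_dvd_imp_multiplicity_0)
  qed
  have mult_b: "multiplicity p (a * b) = multiplicity p b" if "p \<in> prime_factors b" for p
  proof -
    have "prime p" "\<not> p dvd a"
      using False disjoint that by (auto simp: prime_factors_dvd)
    then show ?thesis
      using False by (simp add: prime_elem_multiplicity_mult_distrib not_dvd_imp_multiplicity_0)
  qed
  have "ell (a * b) = (\<Sum>p\<in>prime_factors a. p ^ multiplicity p (a * b)) +
      (\<Sum>p\<in>prime_factors b. p ^ multiplicity p (a * b))"
    using False disjoint by (simp add: ell_def prime_factors_product sum.union_disjoint)
  also have "\<dots> = ell a + ell b"
    by (simp add: ell_def mult_a mult_b)
  finally show ?thesis .
qed

lemma le_two_power_ell:
  fixes M :: nat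
  assumes "M > 0"
  shows "M \<le> 2 ^ ell M"
proof -
  have "M = (\<Prod>p\<in>prime_factors M. p ^ multiplicity p M)"
    using prod_prime_factors[of M] assms by simp
  also have "\<dots> \<le> (\<Prod>p\<in>prime_factors M. 2 ^ (p ^ multiplicity p M))"
    by (rule prod_mono) (auto intro: less_imp_le less_exp)
  also have "\<dots> = 2 ^ ell M"
    by (simp add: ell_def power_sum)
  finally show ?thesis .
qed

lemma finite_ell_le: "finite {M. M \<ge> 1 \<and> ell M \<le> n}"
proof (rule finite_subset)
  show "{M. M \<ge> 1 \<and> ell M \<le> n} \<subseteq> {..(2::nat) ^ n}"
  proof
    fix M assume "M \<in> {M. M \<ge> 1 \<and> ell M \<le> n}"
    then have "M \<le> 2 ^ ell M" "(2::nat) ^ ell M \<le> 2 ^ n"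
      by (simp_all add: le_two_power_ell power_increasing)
    then show "M \<in> {..2 ^ n}" by (simp add: order_trans)
  qed
qed simp

lemma landau_g_mem: "landau_g n \<in> {M. M \<ge> 1 \<and> ell M \<le> n}"
proof -
  have "1 \<in> {M. M \<ge> 1 \<and> ell M \<le> n}" by (simp add: ell_def)
  then show ?thesis
    unfolding landau_g_def using Max_in[OF finite_ell_le] by blast
qed

lemma le_landau_g: "M \<ge> 1 \<Longrightarrow> ell M \<le> n \<Longrightarrow> M \<le> landau_g n"
  unfolding landau_g_def by (rule Max_ge[OF finite_ell_le]) simp

lemma landau_g_exponent_bound:
  fixes n p q :: nat
  defines "a \<equiv> multiplicity p (landau_g n)"
  assumes p: "prime p" and q: "prime q" "p < q" "\<not> q dvd landau_g n" and a: "a \<ge> 2"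
  shows "p ^ (a - 1) * (p - 1) < q"
proof -
  define N where "N = landau_g n"
  define b where "b = a - 1"
  have a_eq: "a = Suc b" and "b > 0" using a by (simp_all add: b_def)
  have "N > 0" using landau_g_mem[of n] by (simp add: N_def)
  moreover have "\<not> is_unit p" using p by (auto simp: not_prime_unit)
  ultimately obtain m where m: "N = p ^ a * m" "\<not> p dvd m"
    using multiplicity_decompose'[of N p] unfolding a_def N_def by blast
  have "\<not> q dvd m" using q(3) m(1) by (auto simp: N_def)
  define N' where "N' = (p ^ b * q) * m" \<comment> \<open>\<open>N' = N q / p\<close>\<close>
  have "coprime (p ^ a) m"
    using prime_imp_power_coprime[OF p m(2)] by (simp add: coprime_commute)
  then have "ell N = p ^ a + ell m"
    using m(1) ell_prime_power[OF p] a by (simp add: ell_mult_coprime)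
  moreover have "ell N' = p ^ b + q + ell m"
  proof -
    have "coprime (p ^ b) q"
      using p q by (simp add: primes_coprime)
    moreover have "coprime (p ^ b * q) m"
      using p q(1) m(2) \<open>\<not> q dvd m\<close> by (simp add: prime_imp_coprime)
    ultimately show ?thesis
      using ell_prime_power[OF p \<open>b > 0\<close>] ell_prime_power[OF q(1), of 1]
      by (simp add: N'_def ell_mult_coprime)
  qed
  moreover have "ell N' > n"
  proof (rule ccontr)
    assume "\<not> ell N' > n"
    moreover have "N' \<ge> 1"
      using \<open>N > 0\<close> m(1) p q(1) by (simp add: N'_def prime_gt_0_nat Suc_leI)
    ultimately have "N' \<le> N"
      using le_landau_g[of N' n] by (simp add: N_def)
    moreover have "p * N' = q * N"
      by (simp add: N'_def m(1) a_eq mult_ac)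
    moreover have "p * N < q * N"
      using \<open>N > 0\<close> q(2) by simp
    ultimately show False
      using mult_le_mono2[of N' N p] by linarith
  qed
  moreover have "ell N \<le> n"
    using landau_g_mem[of n] by (simp add: N_def)
  ultimately have "p * p ^ b < p ^ b + q"
    by (simp add: a_eq)
  moreover have "p * p ^ b = p ^ b * (p - 1) + p ^ b"
    using prime_gt_0_nat[OF p] by (cases p) (simp_all add: algebra_simps)
  ultimately show ?thesis
    unfolding b_def[symmetric] by linarith
qed

lemma le_Pplus: "p \<in> prime_factors M \<Longrightarrow> p \<le> Pplus M"
  unfolding Pplus_def by (rule Max_ge) simp_all

lemma prime_next_prime_gt: "prime (next_prime m) \<and> m < next_prime m"
  unfolding next_prime_def by (rule LeastI_ex) (use bigger_prime in blast)

lemma finite_primes_le: "finite {p::nat. prime p \<and> real p \<le> x}"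
  by (rule finite_subset[of _ "{..nat \<lfloor>x\<rfloor>}"]) (auto intro: le_nat_floor)

lemma sum_ln_le_cheb_theta:
  assumes "A \<subseteq> {p::nat. prime p \<and> real p \<le> x}"
  shows "(\<Sum>p\<in>A. ln (real p)) \<le> cheb_theta x"
  unfolding cheb_theta_def
  by (rule sum_mono2[OF finite_primes_le assms]) (auto dest: prime_gt_0_nat)

lemma le_root_add_one_if_power_mult_less:
  fixes p a q \<alpha> :: nat
  assumes "p ^ (a - 1) * (p - 1) < q" "p \<ge> 2" "1 \<le> \<alpha>" "\<alpha> \<le> a"
  shows "real p \<le> real q powr (1 / real \<alpha>) + 1"
proof -
  define x where "x = real p - 1"
  have x1: "x \<ge> 1" using assms(2) by (simp add: x_def)
  have "x ^ \<alpha> \<le> x ^ a" using x1 assms(4) by (simp add: power_increasing)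
  also have "\<dots> = x ^ (a - 1) * x" using assms(3,4) by (cases a) (auto simp: mult.commute)
  also have "\<dots> \<le> real p ^ (a - 1) * x" using x1 by (intro mult_right_mono power_mono) (auto simp: x_def)
  also have "\<dots> = real (p ^ (a - 1) * (p - 1))" using assms(2) by (simp add: x_def of_nat_diff)
  also have "\<dots> < real q" using assms(1) by linarith
  finally have "x ^ \<alpha> < real q" .
  then have "(x ^ \<alpha>) powr (1 / real \<alpha>) \<le> real q powr (1 / real \<alpha>)"
    using x1 by (intro powr_mono2) auto
  moreover have "(x ^ \<alpha>) powr (1 / real \<alpha>) = x"
    using x1 assms(3) by (simp add: powr_realpow[symmetric] powr_powr)
  ultimately show ?thesis by (simp add: x_def)
qed

lemma exponent_le_if_power_mult_less:
  fixes p a q :: nat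
  assumes "p ^ (a - 1) * (p - 1) < q" "p \<ge> 2" "a \<ge> 1"
  shows "real a \<le> ln (2 * real q) / ln 2"
proof -
  have "(2::nat) ^ (a - 1) \<le> p ^ (a - 1)"
    using assms(2) by (simp add: power_mono)
  also have "\<dots> \<le> p ^ (a - 1) * (p - 1)"
    using assms(2) by simp
  finally have "(2::nat) ^ a < 2 * q" using assms(1,3) by (cases a) auto
  then have "(2::real) ^ a < 2 * real q" by (metis of_nat_less_iff of_nat_mult of_nat_numeral of_nat_power)
  then have "ln ((2::real) ^ a) < ln (2 * real q)"
    using assms(1) by (subst ln_less_cancel_iff) auto
  then show ?thesis by (simp add: ln_realpow pos_le_divide_eq)
qed

lemma ln_eq_sum_multiplicity_ln:
  fixes N :: nat
  assumes "N > 0"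
  shows "ln (real N) = (\<Sum>p\<in>prime_factors N. real (multiplicity p N) * ln (real p))"
proof -
  have "ln (real N) = ln (\<Prod>p\<in>prime_factors N. real p ^ multiplicity p N)"
    using prod_prime_factors[of N] assms by (simp flip: of_nat_prod of_nat_power)
  also have "\<dots> = (\<Sum>p\<in>prime_factors N. ln (real p ^ multiplicity p N))"
    by (rule ln_prod) (auto dest: in_prime_factors_imp_prime prime_gt_0_nat)
  finally show ?thesis
    by (simp add: ln_realpow prime_gt_0_nat)
qed

lemma ln_le_cheb_theta_Pplus_add_S_sum:
  fixes N q :: nat
  assumes "N > 0"
    and exponent_bound: "\<And>p. p \<in> prime_factors N \<Longrightarrow> 2 \<le> multiplicity p N \<Longrightarrow>
           p ^ (multiplicity p N - 1) * (p - 1) < q"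
  shows "ln (real N) \<le> cheb_theta (real (Pplus N)) + S_sum q"
proof -
  define A where "A = {\<alpha>::nat. 2 \<le> \<alpha> \<and> real \<alpha> \<le> ln (2 * real q) / ln 2}"
  have "finite A"
    unfolding A_def by (rule finite_subset[of _ "{..nat \<lfloor>ln (2 * real q) / ln 2\<rfloor>}"])
      (auto intro: le_nat_floor)
  have layers: "real (multiplicity p N) * ln (real p) =
      ln (real p) + (\<Sum>\<alpha>\<in>A. if \<alpha> \<le> multiplicity p N then ln (real p) else 0)"
    if p: "p \<in> prime_factors N" for p
  proof -
    let ?a = "multiplicity p N"
    have "?a \<ge> 1" using p by (auto simp: prime_factors_multiplicity)
    have "{\<alpha>\<in>A. \<alpha> \<le> ?a} = {2..?a}"
    proof (cases "?a \<ge> 2")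
      case True
      then have "real ?a \<le> ln (2 * real q) / ln 2"
        using exponent_le_if_power_mult_less[OF exponent_bound[OF p True]] p
        by (auto intro: prime_ge_2_nat)
      then show ?thesis by (auto simp: A_def)
    qed (auto simp: A_def)
    then have "(\<Sum>\<alpha>\<in>A. if \<alpha> \<le> ?a then ln (real p) else 0) = real (?a - 1) * ln (real p)"
      using \<open>finite A\<close> by (simp add: sum.inter_filter[symmetric])
    then show ?thesis using \<open>?a \<ge> 1\<close> by (simp add: of_nat_diff algebra_simps)
  qed
  have layer_le: "(\<Sum>p\<in>prime_factors N. if \<alpha> \<le> multiplicity p N then ln (real p) else 0)
      \<le> cheb_theta (real q powr (1 / real \<alpha>) + 1)" if "\<alpha> \<in> A" for \<alpha>
  proof -
    have "(\<Sum>p\<in>prime_factors N. if \<alpha> \<le> multiplicity p N then ln (real p) else 0)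
        = (\<Sum>p\<in>{p\<in>prime_factors N. \<alpha> \<le> multiplicity p N}. ln (real p))"
      by (simp add: sum.inter_filter)
    also have "\<dots> \<le> cheb_theta (real q powr (1 / real \<alpha>) + 1)"
    proof (rule sum_ln_le_cheb_theta, safe)
      fix p assume p: "p \<in> prime_factors N" "\<alpha> \<le> multiplicity p N"
      then show "prime p" by auto
      show "real p \<le> real q powr (1 / real \<alpha>) + 1"
        using p \<open>\<alpha> \<in> A\<close> exponent_bound[OF p(1)]
        by (intro le_root_add_one_if_power_mult_less) (auto simp: A_def intro: prime_ge_2_nat)
    qed
    finally show ?thesis .
  qed
  have "ln (real N) = (\<Sum>p\<in>prime_factors N. ln (real p)) +
      (\<Sum>\<alpha>\<in>A. \<Sum>p\<in>prime_factors N. if \<alpha> \<le> multiplicity p N then ln (real p) else 0)"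
    using assms(1) by (simp add: ln_eq_sum_multiplicity_ln layers sum.distrib sum.swap[of _ _ A])
  also have "\<dots> \<le> cheb_theta (real (Pplus N)) + S_sum q"
    unfolding S_sum_def A_def[symmetric]
    by (intro add_mono sum_ln_le_cheb_theta sum_mono layer_le) (auto simp: le_Pplus)
  finally show ?thesis .
qed

theorem mainTheorem17:
  fixes n :: nat
  assumes "n \<ge> 2"
  shows "ln (real (landau_g n)) \<le>
           cheb_theta (real (Pplus (landau_g n))) + S_sum (next_prime (Pplus (landau_g n)))"
proof -
  define N where "N = landau_g n"
  define q where "q = next_prime (Pplus N)"
  have "prime q" "Pplus N < q"
    using prime_next_prime_gt unfolding q_def by blast+
  have "N > 0"
    using landau_g_mem[of n] by (simp add: N_def)
  have "\<not> q dvd N"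
    using \<open>Pplus N < q\<close> \<open>prime q\<close> \<open>N > 0\<close> le_Pplus[of q N] by (auto simp: prime_factors_dvd)
  have "p ^ (multiplicity p N - 1) * (p - 1) < q"
    if "p \<in> prime_factors N" "2 \<le> multiplicity p N" for p
    using that le_Pplus[of p N] \<open>prime q\<close> \<open>Pplus N < q\<close> \<open>\<not> q dvd N\<close>
    by (intro landau_g_exponent_bound[of p q n, folded N_def]) auto
  then show ?thesis
    using ln_le_cheb_theta_Pplus_add_S_sum[OF \<open>N > 0\<close>] unfolding N_def q_def by blast
qed

end
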